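(* In the changepoint model of the context, for $0<j\le i\le n$, $$o_{ji}=\frac{\int\prod_{\ell=j}^{i}p(Y_\ell=y_\ell\mid X_\ell=x)\,\mathcal J(dx)}{\int\prod_{\ell=j}^{i-1}p(Y_\ell=y_\ell\mid X_\ell=x)\,\mathcal J(dx)},\qquad H_{ji}(dx)=\frac{\prod_{\ell=j}^{i}p(Y_\ell=y_\ell\mid X_\ell=x)\,\mathcal J(dx)}{\int\prod_{\ell=j}^{i}p(Y_\ell=y_\ell\mid X_\ell=x)\,\mathcal J(dx)}$$ (an empty product being $1$), and $o_{0i}=o_{1i}$ for $0<i\le n$.
   Context: Model: Let $n\ge 1$ and fix observed data $y_1,\dots,y_n$. Let $(\mathbb X,\mathcal X)$, $(\mathbb Y,\mathcal Y)$ be standard Borel spaces, $\psi$ a $\sigma$-finite measure on $(\mathbb Y,\mathcal Y)$, $\mathcal J$ a probability measure on $(\mathbb X,\mathcal X)$, and $q_{ji}\in[0,1]$ for $0\le j<i\le n$. The model consists of random variables $C_i\in\{0,\dots,i\}$, $X_i\in\mathbb X$, $Y_i\in\mathbb Y$, $i=1,\dots,n$, with joint law factorizing as: $P(C_1=0)=q_{01}$, $P(C_1=1)=1-q_{01}$; for $i\ge2$, $C_i$ depends on the past only through $C_{i-1}$, with $P(C_i=j\mid C_{i-1}=j)=q_{ji}$ and $P(C_i=i\mid C_{i-1}=j)=1-q_{ji}$ ($0\le j\le i-1$); $X_1\sim\mathcal J$ independent of $C_1$; for $i\ge 2$, $X_i$ depends on the past only through $(C_i,X_{i-1})$, with $X_i\sim\mathcal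 J$ if $C_i=i$ and $X_i=X_{i-1}$ if $C_i<i$; $Y_i$ depends on all other variables only through $X_i$, with density $p(Y_i=y\mid X_i=x)$ w.r.t. $\psi$. Assume $\int\prod_{\ell=j}^i p(Y_\ell=y_\ell\mid X_\ell=x)\,\mathcal J(dx)>0$ for all $0<j\le i\le n$. $Y_{a:b}=y_{a:b}$ abbreviates $Y_a=y_a,\dots,Y_b=y_b$. Notation: $H_{ji}=P(X_i\in\cdot\mid C_i=j,Y_{1:i}=y_{1:i})$; $o_{ji}$ is the density $P(Y_i\in dy_i\mid C_i=j,Y_{j:i-1}=y_{j:i-1})/\psi(dy_i)$ evaluated at $y_i$ (for $j=0$ the conditioning is on $Y_{1:i-1}=y_{1:i-1}$, for $j=i$ only on $C_i=i$). *)

theory Defs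
  imports "HOL-Probability.Probability"
begin

text \<open>Changepoint model. Time indices are 1..n. A changepoint path is a function
  c with c l = C_l for l in {1..n}.\<close>

definition init_prob :: "(nat \<Rightarrow> nat \<Rightarrow> real) \<Rightarrow> nat \<Rightarrow> real" where
  "init_prob q b = (if b = 0 then q 0 1 else if b = 1 then 1 - q 0 1 else 0)"

text \<open>P(C_l = b | C_{l-1} = a), for l >= 2.\<close>
definition trans_prob :: "(nat \<Rightarrow> nat \<Rightarrow> real) \<Rightarrow> nat \<Rightarrow> nat \<Rightarrow> nat \<Rightarrow> real" where
  "trans_prob q l a b = (if b = a then q a l else if b = l then 1 - q a l else 0)"

definition path_prob :: "nat \<Rightarrow> (nat \<Rightarrow> nat \<Rightarrow> real) \<Rightarrow> (nat \<Rightarrow> nat) \<Rightarrow> real" where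
  "path_prob n q c = init_prob q (c 1) * (\<Prod>l\<in>{2..n}. trans_prob q l (c (l - 1)) (c l))"

definition cp_paths :: "nat \<Rightarrow> (nat \<Rightarrow> nat) set" where
  "cp_paths n = {1..n} \<rightarrow>\<^sub>E {0..n}"

text \<open>Given the path c and i.i.d. J-draws xi_1..xi_n, the X process:
  X_1 = xi_1; X_l = xi_l if C_l = l, otherwise X_l = X_{l-1}.\<close>
fun seg_val :: "(nat \<Rightarrow> nat) \<Rightarrow> (nat \<Rightarrow> 'x) \<Rightarrow> nat \<Rightarrow> 'x" where
  "seg_val c \<xi> 0 = \<xi> 0"
| "seg_val c \<xi> (Suc l) =
     (if l = 0 then \<xi> 1 else if c (Suc l) = Suc l then \<xi> (Suc l) else seg_val c \<xi> l)"

definition prob_C :: "nat \<Rightarrow> (nat \<Rightarrow> nat \<Rightarrow> real) \<Rightarrow> nat \<Rightarrow> nat \<Rightarrow> real" where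
  "prob_C n q i j = (\<Sum>c\<in>cp_paths n. if c i = j then path_prob n q c else 0)"

text \<open>Canonical version of the density (w.r.t. psi on the observed coordinates S)
  of the measure  B \<mapsto> P(C_i = j, X_i \<in> A, Y_S \<in> B), evaluated at y_S:
  obtained from the joint law of (C,X) and the observation densities p,
  the unobserved Y's being integrated out.\<close>
definition joint_dens ::
  "nat \<Rightarrow> (nat \<Rightarrow> nat \<Rightarrow> real) \<Rightarrow> 'x measure \<Rightarrow> ('x \<Rightarrow> 'y \<Rightarrow> real) \<Rightarrow> (nat \<Rightarrow> 'y)
    \<Rightarrow> nat set \<Rightarrow> nat \<Rightarrow> nat \<Rightarrow> 'x set \<Rightarrow> real" where
  "joint_dens n q J p y S i j A =
     (\<Sum>c\<in>cp_paths n. path_prob n q c *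
        (\<integral>\<xi>. (if c i = j \<and> seg_val c \<xi> i \<in> A
               then (\<Prod>l\<in>S. p (seg_val c \<xi> l) (y l)) else 0) \<partial>(PiM {1..n} (\<lambda>_. J))))"

text \<open>o_{ji}: density of P(Y_i \<in> dy_i | C_i = j, Y_{j:i-1} = y_{j:i-1}) at y_i
  (for j = 0 conditioning on Y_{1:i-1}, for j = i only on C_i = i).\<close>
definition o_fun ::
  "nat \<Rightarrow> (nat \<Rightarrow> nat \<Rightarrow> real) \<Rightarrow> 'x measure \<Rightarrow> ('x \<Rightarrow> 'y \<Rightarrow> real) \<Rightarrow> (nat \<Rightarrow> 'y)
    \<Rightarrow> nat \<Rightarrow> nat \<Rightarrow> real" where
  "o_fun n q J p y j i =
     joint_dens n q J p y {max j 1..i} i j UNIV / joint_dens n q J p y {max j 1..<i} i j UNIV"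

text \<open>H_{ji} = P(X_i \<in> . | C_i = j, Y_{1:i} = y_{1:i}).\<close>
definition H_fun ::
  "nat \<Rightarrow> (nat \<Rightarrow> nat \<Rightarrow> real) \<Rightarrow> 'x measure \<Rightarrow> ('x \<Rightarrow> 'y \<Rightarrow> real) \<Rightarrow> (nat \<Rightarrow> 'y)
    \<Rightarrow> nat \<Rightarrow> nat \<Rightarrow> 'x measure" where
  "H_fun n q J p y j i = measure_of (space J) (sets J)
     (\<lambda>A. ennreal (joint_dens n q J p y {1..i} i j A / joint_dens n q J p y {1..i} i j UNIV))"

end

theory Submission
  imports Defs
begin

(* On a changepoint path of positive probability every C_l either keeps the previous value or
   equals l, so X_l is the draw \<xi>_(max C_l 1) and C is constant on the segment
   {max C_i 1..i}. Given C_i = j > 0, the likelihood of y_(1:i) hence splits into a factor that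
   only involves the draws before time j and the factor prod_(l=j..i) p(y_l | \<xi>_j). Integrating
   out the independent draws, the joint density of (C_i = j, X_i \<in> A, Y_(1:i) = y_(1:i)) is
   K * int_A prod_(l=j..i) p(y_l | x) J(dx), with K > 0 independent of A; the same computation
   for the observations Y_(j:i) alone gives P(C_i = j) * int prod_(l=j..i) p(y_l | x) J(dx).
   Both formulas are ratios of such expressions, and for j = 0 and j = 1 the segment is {1..i}. *)

lemma integral_PiM_mult_component:
  fixes M :: "'i \<Rightarrow> 'a measure" and G :: "('i \<Rightarrow> 'a) \<Rightarrow> real" and H :: "'a \<Rightarrow> real"
  assumes M: "\<And>i. prob_space (M i)" and I: "finite I" "s \<in> I"
    and G: "G \<in> borel_measurable (PiM I M)" "G \<in> borel_measurable (PiM (I - {s}) M)"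
    and H: "H \<in> borel_measurable (M s)"
    and G_nonneg: "\<And>\<xi>. 0 \<le> G \<xi>" and H_nonneg: "\<And>x. 0 \<le> H x"
    and G_indep: "\<And>\<xi> v. G (\<xi>(s := v)) = G \<xi>"
  shows "(\<integral>\<xi>. G \<xi> * H (\<xi> s) \<partial>PiM I M) = (\<integral>\<xi>. G \<xi> \<partial>PiM I M) * (\<integral>x. H x \<partial>M s)"
proof -
  interpret product_sigma_finite M
    by (simp add: product_sigma_finite_def prob_space_imp_sigma_finite M)
  interpret Ms: prob_space "M s" by (rule M)
  define I' where "I' = I - {s}"
  have I': "I = insert s I'" "finite I'" "s \<notin> I'" using I by (auto simp: I'_def)
  have H_s: "(\<lambda>\<xi>. H (\<xi> s)) \<in> borel_measurable (PiM I M)"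
    by (rule measurable_compose[OF measurable_component_singleton[OF I(2), where M=M] H])
  have "(\<integral>\<^sup>+\<xi>. ennreal (G \<xi> * H (\<xi> s)) \<partial>PiM I M)
      = (\<integral>\<^sup>+\<xi>. \<integral>\<^sup>+v. ennreal (G (\<xi>(s := v)) * H v) \<partial>M s \<partial>PiM I' M)"
    using product_nn_integral_insert[OF I'(2,3), of "\<lambda>\<xi>. ennreal (G \<xi> * H (\<xi> s))"] G(1) H_s
    unfolding I'(1) by simp
  also have "\<dots> = (\<integral>\<^sup>+\<xi>. ennreal (G \<xi>) * (\<integral>\<^sup>+v. ennreal (H v) \<partial>M s) \<partial>PiM I' M)"
    by (simp add: G_indep ennreal_mult G_nonneg H_nonneg nn_integral_cmult H)
  also have "\<dots> = (\<integral>\<^sup>+\<xi>. ennreal (G \<xi>) \<partial>PiM I' M) * (\<integral>\<^sup>+v. ennreal (H v) \<partial>M s)"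
    using G(2) unfolding I'_def by (intro nn_integral_multc) simp
  also have "(\<integral>\<^sup>+\<xi>. ennreal (G \<xi>) \<partial>PiM I' M) = (\<integral>\<^sup>+\<xi>. ennreal (G \<xi>) \<partial>PiM I M)"
    using product_nn_integral_insert[OF I'(2,3), of "\<lambda>\<xi>. ennreal (G \<xi>)"] G(1)
    unfolding I'(1) by (simp add: G_indep Ms.emeasure_space_1)
  finally show ?thesis
    using G(1) H H_s by (simp add: integral_eq_nn_integral G_nonneg H_nonneg enn2real_mult)
qed

lemma measure_of_normalized_eq_density:
  fixes f :: "'a \<Rightarrow> real"
  assumes f: "integrable M f" "\<And>x. 0 \<le> f x" and K: "K \<noteq> 0"
    and F: "\<And>A. A \<in> sets M \<Longrightarrow> F A = K * (\<integral>x. indicator A x * f x \<partial>M)"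
  shows "measure_of (space M) (sets M) (\<lambda>A. ennreal (F A / F (space M)))
    = density M (\<lambda>x. ennreal (f x / (\<integral>x. f x \<partial>M)))"
proof -
  define Z where "Z = (\<integral>x. f x \<partial>M)"
  have Z: "0 \<le> Z" using f by (simp add: Z_def)
  have Z_eq: "Z = (\<integral>x. indicator (space M) x * f x \<partial>M)"
    unfolding Z_def by (rule Bochner_Integration.integral_cong) auto
  have "emeasure (density M (\<lambda>x. ennreal (f x / Z))) A = ennreal (F A / F (space M))"
    if A: "A \<in> sets M" for A
  proof -
    have "emeasure (density M (\<lambda>x. ennreal (f x / Z))) A
        = (\<integral>\<^sup>+x. ennreal (indicator A x * f x / Z) \<partial>M)"
      using A f by (subst emeasure_density) (auto intro!: nn_integral_cong simp: indicator_def)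
    also have "\<dots> = ennreal (\<integral>x. indicator A x * f x / Z \<partial>M)"
      using integrable_mult_indicator[OF A f(1)] f Z by (intro nn_integral_eq_integral) auto
    also have "\<dots> = ennreal (F A / F (space M))"
      using F[OF A] F[OF sets.top] K by (simp add: Z_eq)
    finally show ?thesis .
  qed
  then have "measure_of (space M) (sets M) (\<lambda>A. ennreal (F A / F (space M)))
      = measure_of (space M) (sets M) (emeasure (density M (\<lambda>x. ennreal (f x / Z))))"
    by (intro measure_of_eq sets.space_closed) (simp add: sets.sigma_sets_eq)
  also have "\<dots> = density M (\<lambda>x. ennreal (f x / Z))"
    using measure_of_of_measure[of "density M (\<lambda>x. ennreal (f x / Z))"] by simp
  finally show ?thesis by (simp add: Z_def)
qed

locale changepoint_model =
  fixes n :: nat and q :: "nat \<Rightarrow> nat \<Rightarrow> real" and J :: "'x measure"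
    and p :: "'x \<Rightarrow> 'y \<Rightarrow> real" and y :: "nat \<Rightarrow> 'y"
  assumes n_pos: "1 \<le> n" and J_prob: "prob_space J" and space_J: "space J = UNIV"
    and q_prob: "\<And>j i. j < i \<Longrightarrow> i \<le> n \<Longrightarrow> 0 \<le> q j i \<and> q j i \<le> 1"
    and p_measurable: "\<And>v. (\<lambda>x. p x v) \<in> borel_measurable J"
    and p_nonneg: "\<And>x v. 0 \<le> p x v"
    and evidence_pos:
      "\<And>j i. 0 < j \<Longrightarrow> j \<le> i \<Longrightarrow> i \<le> n \<Longrightarrow> 0 < (\<integral>x. (\<Prod>l\<in>{j..i}. p x (y l)) \<partial>J)"
begin

definition admissible :: "(nat \<Rightarrow> nat) \<Rightarrow> bool" where
  "admissible c \<longleftrightarrow> c 1 \<le> 1 \<and> (\<forall>l\<in>{2..n}. c l = c (l - 1) \<or> c l = l)"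

(* X_l is the draw \<xi>_(C_l); the segment with C_l = 0 also starts with \<xi>_1, hence the max. *)
definition path_lik :: "(nat \<Rightarrow> nat) \<Rightarrow> nat set \<Rightarrow> (nat \<Rightarrow> 'x) \<Rightarrow> real" where
  "path_lik c T \<xi> = (\<Prod>l\<in>T. p (\<xi> (max (c l) 1)) (y l))"

abbreviation draws :: "(nat \<Rightarrow> 'x) measure" where
  "draws \<equiv> PiM {1..n} (\<lambda>_. J)"

lemma admissible_if_path_prob_nonzero:
  assumes "path_prob n q c \<noteq> 0"
  shows "admissible c"
proof -
  have "init_prob q (c 1) \<noteq> 0" and trans: "(\<Prod>l\<in>{2..n}. trans_prob q l (c (l - 1)) (c l)) \<noteq> 0"
    using assms by (auto simp: path_prob_def)
  then have "c 1 \<le> 1" by (auto simp: init_prob_def split: if_splits)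
  moreover have "c l = c (l - 1) \<or> c l = l" if "l \<in> {2..n}" for l
  proof -
    have "trans_prob q l (c (l - 1)) (c l) \<noteq> 0" using trans that by simp
    then show ?thesis by (auto simp: trans_prob_def split: if_splits)
  qed
  ultimately show ?thesis by (simp add: admissible_def)
qed

lemma admissible_le:
  assumes "admissible c" "l \<in> {1..n}"
  shows "c l \<le> l"
  using assms(2)
proof (induction l)
  case (Suc l)
  then show ?case
    using assms(1) by (cases "l = 0") (auto simp: admissible_def dest!: bspec[of _ _ "Suc l"])
qed simp

lemma path_prob_nonneg: "0 \<le> path_prob n q c"
proof (cases "path_prob n q c = 0")
  case False
  then have c: "admissible c" by (rule admissible_if_path_prob_nonzero)
  have "0 \<le> init_prob q (c 1)" using q_prob[of 0 1] n_pos by (simp add: init_prob_def)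
  moreover have "0 \<le> trans_prob q l (c (l - 1)) (c l)" if l: "l \<in> {2..n}" for l
  proof -
    have "l - 1 \<in> {1..n}" using l by auto
    then have "c (l - 1) \<le> l - 1" by (rule admissible_le[OF c])
    then have "0 \<le> q (c (l - 1)) l \<and> q (c (l - 1)) l \<le> 1" using l by (intro q_prob) auto
    then show ?thesis by (simp add: trans_prob_def)
  qed
  ultimately show ?thesis unfolding path_prob_def by (intro mult_nonneg_nonneg prod_nonneg) auto
qed simp

lemma seg_val_admissible:
  assumes "admissible c" "l \<in> {1..n}"
  shows "seg_val c \<xi> l = \<xi> (max (c l) 1)"
  using assms(2)
proof (induction l)
  case (Suc l)
  show ?case
  proof (cases "l = 0")
    case True
    then show ?thesis using assms(1) by (simp add: admissible_def max_def)
  next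
    case False
    then have "Suc l \<in> {2..n}" using Suc.prems by auto
    then have "c (Suc l) = c l \<or> c (Suc l) = Suc l"
      using assms(1) unfolding admissible_def by fastforce
    then show ?thesis using Suc False by auto
  qed
qed simp

lemma admissible_const_on_segment:
  assumes c: "admissible c" and m: "m \<le> n" and l: "l \<in> {max (c m) 1..m}"
  shows "c l = c m"
proof -
  have "l \<le> m" using l by simp
  then show ?thesis
  proof (induction rule: inc_induct)
    case (step k)
    then have "Suc k \<in> {2..n}" using l m by auto
    then have "c (Suc k) = c (Suc k - 1) \<or> c (Suc k) = Suc k"
      using c unfolding admissible_def by blast
    moreover have "c (Suc k) \<noteq> Suc k" using step l by auto
    ultimately show ?case using step by simp
  qed simp
qed

lemma path_lik_nonneg: "0 \<le> path_lik c T \<xi>"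
  unfolding path_lik_def by (intro prod_nonneg) (auto intro: p_nonneg)

lemma path_lik_measurable:
  assumes "\<And>l. l \<in> T \<Longrightarrow> max (c l) 1 \<in> I"
  shows "path_lik c T \<in> borel_measurable (PiM I (\<lambda>_. J))"
  unfolding path_lik_def[abs_def]
proof (rule borel_measurable_prod)
  fix l assume "l \<in> T"
  show "(\<lambda>\<xi>. p (\<xi> (max (c l) 1)) (y l)) \<in> borel_measurable (PiM I (\<lambda>_. J))"
    by (rule measurable_compose[OF measurable_component_singleton[OF assms[OF \<open>l \<in> T\<close>]]
          p_measurable])
qed

lemma path_lik_split:
  assumes c: "admissible c" and m: "m \<le> n" and S: "S \<subseteq> {1..m}"
  shows "path_lik c S \<xi> = path_lik c (S \<inter> {1..<max (c m) 1}) \<xi>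
    * (\<Prod>l\<in>S \<inter> {max (c m) 1..m}. p (\<xi> (max (c m) 1)) (y l))"
proof -
  let ?s = "max (c m) 1"
  have "finite S" using S finite_subset by blast
  have "S = (S \<inter> {1..<?s}) \<union> (S \<inter> {?s..m})" using S by auto
  then have "path_lik c S \<xi> = path_lik c ((S \<inter> {1..<?s}) \<union> (S \<inter> {?s..m})) \<xi>"
    by simp
  also have "\<dots> = path_lik c (S \<inter> {1..<?s}) \<xi> * path_lik c (S \<inter> {?s..m}) \<xi>"
    unfolding path_lik_def by (rule prod.union_disjoint) (use \<open>finite S\<close> in auto)
  also have "path_lik c (S \<inter> {?s..m}) \<xi> = (\<Prod>l\<in>S \<inter> {?s..m}. p (\<xi> ?s) (y l))"
    unfolding path_lik_def
  proof (rule prod.cong)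
    fix l assume "l \<in> S \<inter> {?s..m}"
    then have "c l = c m" by (intro admissible_const_on_segment[OF c m]) simp
    then show "p (\<xi> (max (c l) 1)) (y l) = p (\<xi> ?s) (y l)" by simp
  qed simp
  finally show ?thesis .
qed

lemma integral_path_lik_split:
  assumes c: "admissible c" and m: "1 \<le> m" "m \<le> n" and S: "S \<subseteq> {1..m}"
    and A: "A \<in> sets J"
  shows "(\<integral>\<xi>. indicator A (\<xi> (max (c m) 1)) * path_lik c S \<xi> \<partial>draws)
    = (\<integral>\<xi>. path_lik c (S \<inter> {1..<max (c m) 1}) \<xi> \<partial>draws)
      * (\<integral>x. indicator A x * (\<Prod>l\<in>S \<inter> {max (c m) 1..m}. p x (y l)) \<partial>J)"
proof -
  define s where "s = max (c m) 1"
  define G where "G = path_lik c (S \<inter> {1..<s})"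
  define H where "H = (\<lambda>x. indicator A x * (\<Prod>l\<in>S \<inter> {s..m}. p x (y l)))"
  have s: "s \<in> {1..n}" using admissible_le[OF c, of m] m by (auto simp: s_def)
  have before_s: "max (c l) 1 \<in> {1..n} - {s}" if "l \<in> S \<inter> {1..<s}" for l
  proof -
    have "l \<in> {1..n}" "l < s" using that S m by auto
    then show ?thesis using admissible_le[OF c, of l] by auto
  qed
  have G_indep: "G (\<xi>(s := v)) = G \<xi>" for \<xi> v
    unfolding G_def path_lik_def using before_s by (intro prod.cong) auto
  have "(\<integral>\<xi>. indicator A (\<xi> s) * path_lik c S \<xi> \<partial>draws) = (\<integral>\<xi>. G \<xi> * H (\<xi> s) \<partial>draws)"
    using path_lik_split[OF c m(2) S] by (simp add: G_def H_def s_def mult_ac)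
  also have "\<dots> = (\<integral>\<xi>. G \<xi> \<partial>draws) * (\<integral>x. H x \<partial>J)"
  proof (rule integral_PiM_mult_component)
    show "G \<in> borel_measurable (PiM ({1..n} - {s}) (\<lambda>_. J))"
      unfolding G_def using before_s by (rule path_lik_measurable)
    show "G \<in> borel_measurable draws"
      unfolding G_def using before_s by (intro path_lik_measurable) blast
    show "H \<in> borel_measurable J"
      unfolding H_def using A p_measurable by measurable
    show "0 \<le> H x" for x
      unfolding H_def by (intro mult_nonneg_nonneg prod_nonneg) (auto intro: p_nonneg)
  qed (use J_prob s G_indep in \<open>auto simp: G_def path_lik_nonneg\<close>)
  finally show ?thesis by (simp add: s_def G_def H_def)
qed

lemma integral_path_lik_empty: "(\<integral>\<xi>. path_lik c {} \<xi> \<partial>PiM I (\<lambda>_. J)) = 1"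
proof -
  interpret prob_space "PiM I (\<lambda>_. J)" by (intro prob_space_PiM J_prob)
  show ?thesis using emeasure_space_1 by (simp add: path_lik_def measure_def)
qed

lemma integral_path_lik_pos:
  assumes c: "admissible c" and m: "m \<le> n"
  shows "0 < (\<integral>\<xi>. path_lik c {1..m} \<xi> \<partial>draws)"
  using m
proof (induction m rule: less_induct)
  case (less m)
  show ?case
  proof (cases "m = 0")
    case True
    then show ?thesis using integral_path_lik_empty by simp
  next
    case False
    define s where "s = max (c m) 1"
    have s: "1 \<le> s" "s \<le> m" using admissible_le[OF c, of m] False less.prems by (auto simp: s_def)
    have ivl_eqs: "{1..m} \<inter> {1..<s} = {1..s - 1}" "{1..m} \<inter> {s..m} = {s..m}" using s by auto
    have "(\<integral>\<xi>. path_lik c {1..m} \<xi> \<partial>draws)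
        = (\<integral>\<xi>. indicator UNIV (\<xi> s) * path_lik c {1..m} \<xi> \<partial>draws)"
      by simp
    also have "\<dots> = (\<integral>\<xi>. path_lik c ({1..m} \<inter> {1..<s}) \<xi> \<partial>draws)
        * (\<integral>x. indicator UNIV x * (\<Prod>l\<in>{1..m} \<inter> {s..m}. p x (y l)) \<partial>J)"
      unfolding s_def using False less.prems space_J sets.top[of J]
      by (intro integral_path_lik_split[OF c]) auto
    also have "\<dots> = (\<integral>\<xi>. path_lik c {1..s - 1} \<xi> \<partial>draws) * (\<integral>x. (\<Prod>l\<in>{s..m}. p x (y l)) \<partial>J)"
      unfolding ivl_eqs by simp
    also have "0 < \<dots>"
      using less.IH[of "s - 1"] evidence_pos[of s m] s less.prems by auto
    finally show ?thesis .
  qed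
qed

lemma joint_dens_eq:
  assumes i: "1 \<le> i" "i \<le> n" and S: "S \<subseteq> {1..i}" and A: "A \<in> sets J"
  shows "joint_dens n q J p y S i j A =
    (\<Sum>c\<in>cp_paths n. if c i = j
       then path_prob n q c * (\<integral>\<xi>. path_lik c (S \<inter> {1..<max j 1}) \<xi> \<partial>draws) else 0)
    * (\<integral>x. indicator A x * (\<Prod>l\<in>S \<inter> {max j 1..i}. p x (y l)) \<partial>J)"
  unfolding joint_dens_def sum_distrib_right
proof (rule sum.cong[OF refl])
  fix c
  show "path_prob n q c * (\<integral>\<xi>. (if c i = j \<and> seg_val c \<xi> i \<in> A
        then \<Prod>l\<in>S. p (seg_val c \<xi> l) (y l) else 0) \<partial>draws)
    = (if c i = j then path_prob n q c * (\<integral>\<xi>. path_lik c (S \<inter> {1..<max j 1}) \<xi> \<partial>draws) else 0)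
      * (\<integral>x. indicator A x * (\<Prod>l\<in>S \<inter> {max j 1..i}. p x (y l)) \<partial>J)"
  proof (cases "path_prob n q c \<noteq> 0 \<and> c i = j")
    case True
    then have c: "admissible c" and j: "c i = j"
      using admissible_if_path_prob_nonzero by auto
    have "(if c i = j \<and> seg_val c \<xi> i \<in> A then \<Prod>l\<in>S. p (seg_val c \<xi> l) (y l) else 0)
        = indicator A (\<xi> (max (c i) 1)) * path_lik c S \<xi>" for \<xi>
    proof -
      have seg_val_eq: "seg_val c \<xi> l = \<xi> (max (c l) 1)" if "l \<in> insert i S" for l
        using S i that by (intro seg_val_admissible[OF c]) auto
      then have "seg_val c \<xi> i = \<xi> (max (c i) 1)" by simp
      moreover have "(\<Prod>l\<in>S. p (seg_val c \<xi> l) (y l)) = path_lik c S \<xi>"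
        unfolding path_lik_def using seg_val_eq by (intro prod.cong) auto
      ultimately show ?thesis using j by (simp add: indicator_def)
    qed
    then show ?thesis
      using integral_path_lik_split[OF c i S A] j by simp
  next
    case False
    then show ?thesis by auto
  qed
qed

lemma joint_dens_UNIV_segment:
  assumes i: "1 \<le> i" "i \<le> n" and S: "S \<subseteq> {max j 1..i}"
  shows "joint_dens n q J p y S i j UNIV = prob_C n q i j * (\<integral>x. (\<Prod>l\<in>S. p x (y l)) \<partial>J)"
proof -
  have ivl: "S \<inter> {1..<max j 1} = {}" "S \<inter> {max j 1..i} = S" and "S \<subseteq> {1..i}"
    using S by (fastforce simp del: max_def)+
  have "UNIV \<in> sets J" using sets.top[of J] space_J by simp
  from joint_dens_eq[OF i \<open>S \<subseteq> {1..i}\<close> this, of j]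
  have "joint_dens n q J p y S i j UNIV
      = (\<Sum>c\<in>cp_paths n. if c i = j then path_prob n q c * (\<integral>\<xi>. path_lik c {} \<xi> \<partial>draws) else 0)
        * (\<integral>x. indicator UNIV x * (\<Prod>l\<in>S. p x (y l)) \<partial>J)"
    unfolding ivl .
  also have "\<dots> = prob_C n q i j * (\<integral>x. (\<Prod>l\<in>S. p x (y l)) \<partial>J)"
    unfolding prob_C_def by (simp add: integral_path_lik_empty if_distrib cong: if_cong)
  finally show ?thesis .
qed

lemma o_fun_eq:
  assumes i: "1 \<le> i" "i \<le> n" and "prob_C n q i j \<noteq> 0"
  shows "o_fun n q J p y j i
    = (\<integral>x. (\<Prod>l\<in>{max j 1..i}. p x (y l)) \<partial>J) / (\<integral>x. (\<Prod>l\<in>{max j 1..<i}. p x (y l)) \<partial>J)"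
proof -
  have "{max j 1..i} \<subseteq> {max j 1..i}" "{max j 1..<i} \<subseteq> {max j 1..i}" by auto
  then show ?thesis
    unfolding o_fun_def using joint_dens_UNIV_segment[OF i] assms(3) by simp
qed

lemma joint_dens_posterior:
  assumes j: "0 < j" "j \<le> i" "i \<le> n" and P: "prob_C n q i j \<noteq> 0"
  shows "\<exists>K>0. \<forall>A\<in>sets J.
    joint_dens n q J p y {1..i} i j A = K * (\<integral>x. indicator A x * (\<Prod>l\<in>{j..i}. p x (y l)) \<partial>J)"
proof -
  define K where "K = (\<Sum>c\<in>cp_paths n. if c i = j
    then path_prob n q c * (\<integral>\<xi>. path_lik c {1..j - 1} \<xi> \<partial>draws) else 0)"
  have ivl: "{1..i} \<inter> {1..<max j 1} = {1..j - 1}" "{1..i} \<inter> {max j 1..i} = {j..i}"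
    using j by auto
  obtain c where c: "c \<in> cp_paths n" "c i = j" "path_prob n q c \<noteq> 0"
    using P unfolding prob_C_def by (auto elim: sum.not_neutral_contains_not_neutral split: if_splits)
  have "0 < K"
    unfolding K_def
  proof (rule sum_pos2[OF _ c(1)])
    show "finite (cp_paths n)" by (simp add: cp_paths_def finite_PiE)
    have "0 < path_prob n q c" using c(3) path_prob_nonneg[of c] by simp
    moreover have "0 < (\<integral>\<xi>. path_lik c {1..j - 1} \<xi> \<partial>draws)"
      using admissible_if_path_prob_nonzero[OF c(3)] j by (intro integral_path_lik_pos) auto
    ultimately show "0 < (if c i = j
        then path_prob n q c * (\<integral>\<xi>. path_lik c {1..j - 1} \<xi> \<partial>draws) else 0)"
      using c(2) by simp
  qed (auto intro!: mult_nonneg_nonneg path_prob_nonneg Bochner_Integration.integral_nonneg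
      path_lik_nonneg)
  moreover have "joint_dens n q J p y {1..i} i j A
      = K * (\<integral>x. indicator A x * (\<Prod>l\<in>{j..i}. p x (y l)) \<partial>J)" if "A \<in> sets J" for A
    using joint_dens_eq[of i "{1..i}" A j] j that unfolding ivl K_def by simp
  ultimately show ?thesis by blast
qed

lemma H_fun_eq:
  assumes "0 < j" "j \<le> i" "i \<le> n" "prob_C n q i j \<noteq> 0"
  shows "H_fun n q J p y j i = density J (\<lambda>x. ennreal ((\<Prod>l\<in>{j..i}. p x (y l)) /
    (\<integral>x'. (\<Prod>l\<in>{j..i}. p x' (y l)) \<partial>J)))"
proof -
  obtain K where "0 < K" and joint_dens_K: "\<And>A. A \<in> sets J \<Longrightarrow>
      joint_dens n q J p y {1..i} i j A = K * (\<integral>x. indicator A x * (\<Prod>l\<in>{j..i}. p x (y l)) \<partial>J)"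
    using joint_dens_posterior[OF assms] by blast
  have "integrable J (\<lambda>x. \<Prod>l\<in>{j..i}. p x (y l))"
    using evidence_pos[of j i] assms not_integrable_integral_eq by fastforce
  then show ?thesis
    unfolding H_fun_def space_J[symmetric]
    by (rule measure_of_normalized_eq_density[where K = K])
      (use \<open>0 < K\<close> joint_dens_K in \<open>auto intro: prod_nonneg p_nonneg\<close>)
qed

end

theorem mainTheorem3:
  fixes n :: nat and q :: "nat \<Rightarrow> nat \<Rightarrow> real"
    and J :: "'x::polish_space measure" and \<psi> :: "'y::polish_space measure"
    and p :: "'x \<Rightarrow> 'y \<Rightarrow> real" and y :: "nat \<Rightarrow> 'y"
  assumes "n \<ge> 1"
    and "prob_space J" and "sets J = sets borel"
    and "sigma_finite_measure \<psi>" and "sets \<psi> = sets borel"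
    and "\<forall>j i. j < i \<and> i \<le> n \<longrightarrow> 0 \<le> q j i \<and> q j i \<le> 1"
    and "(\<lambda>(x, v). p x v) \<in> borel_measurable (J \<Otimes>\<^sub>M \<psi>)"
    and "\<forall>x v. 0 \<le> p x v"
    and "\<forall>x\<in>space J. (\<integral>\<^sup>+ v. ennreal (p x v) \<partial>\<psi>) = 1"
    and "\<forall>j i. 0 < j \<and> j \<le> i \<and> i \<le> n \<longrightarrow> (\<integral>x. (\<Prod>l\<in>{j..i}. p x (y l)) \<partial>J) > 0"
  shows "(\<forall>j i. 0 < j \<and> j \<le> i \<and> i \<le> n \<and> prob_C n q i j > 0 \<longrightarrow>
            o_fun n q J p y j i =
              (\<integral>x. (\<Prod>l\<in>{j..i}. p x (y l)) \<partial>J) / (\<integral>x. (\<Prod>l\<in>{j..<i}. p x (y l)) \<partial>J)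
          \<and> H_fun n q J p y j i =
              density J (\<lambda>x. ennreal ((\<Prod>l\<in>{j..i}. p x (y l)) /
                                       (\<integral>x'. (\<Prod>l\<in>{j..i}. p x' (y l)) \<partial>J))))
       \<and> (\<forall>i. 0 < i \<and> i \<le> n \<and> prob_C n q i 0 > 0 \<and> prob_C n q i 1 > 0 \<longrightarrow>
            o_fun n q J p y 0 i = o_fun n q J p y 1 i)"
proof -
  have "space \<psi> = UNIV" using sets_eq_imp_space_eq[OF assms(5)] by simp
  then have "(\<lambda>x. (x, v)) \<in> measurable J (J \<Otimes>\<^sub>M \<psi>)" for v
    by (intro measurable_Pair2') simp
  from measurable_compose[OF this assms(7)]
  have p_measurable: "(\<lambda>x. p x v) \<in> borel_measurable J" for v by simp
  interpret changepoint_model n q J p y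
  proof (rule changepoint_model.intro)
    show "space J = UNIV" using sets_eq_imp_space_eq[OF assms(3)] by simp
  qed (use assms(1,2,6,8,10) p_measurable in simp_all)
  show ?thesis
  proof (intro conjI allI impI)
    fix j i assume ji: "0 < j \<and> j \<le> i \<and> i \<le> n \<and> prob_C n q i j > 0"
    then show "o_fun n q J p y j i =
        (\<integral>x. (\<Prod>l\<in>{j..i}. p x (y l)) \<partial>J) / (\<integral>x. (\<Prod>l\<in>{j..<i}. p x (y l)) \<partial>J)"
      using o_fun_eq[of i j] by (simp add: max_absorb1)
    show "H_fun n q J p y j i = density J (\<lambda>x. ennreal ((\<Prod>l\<in>{j..i}. p x (y l)) /
        (\<integral>x'. (\<Prod>l\<in>{j..i}. p x' (y l)) \<partial>J)))"
      using ji H_fun_eq[of j i] by simp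
  next
    fix i assume "0 < i \<and> i \<le> n \<and> prob_C n q i 0 > 0 \<and> prob_C n q i 1 > 0"
    then show "o_fun n q J p y 0 i = o_fun n q J p y 1 i"
      using o_fun_eq[of i 0] o_fun_eq[of i 1] by simp
  qed
qed

end
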